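(* Let $\Sigma=((x_1,x_2),(x_3,x_4),B)$ where $B$ has rows indexed by $x_1,x_2,x_3,x_4$ and columns by $x_1,x_2$ given by $\begin{pmatrix}0&1\\-1&0\\0&-1\\0&0\end{pmatrix}$. Then $\mathcal A(\Sigma)=\mathbb Z[x_1,x_2,x_3,x_4,\frac{1+x_2}{x_1},\frac{x_1+x_3}{x_2},\frac{x_1+x_3+x_2x_3}{x_1x_2}]$, and for every $y\in\mathcal A(\Sigma)$ there is a ring homomorphism $f:\mathcal A(\Sigma)\to\mathcal A(\Sigma)$ with $x_1\mapsto0$, $x_2\mapsto-1$, $x_3\mapsto 0$, $x_4\mapsto x_1$, $\frac{1+x_2}{x_1}\mapsto y$, $\frac{x_1+x_3}{x_2}\mapsto0$, $\frac{x_1+x_3+x_2x_3}{x_1x_2}\mapsto -1$, which is a rooted cluster morphism $\mathcal A(\Sigma)\to\mathcal A(\Sigma)$. In particular rooted cluster morphisms are not determined by the images of the initial cluster variables. Moreover for $y=x_2$ one has $f(\mathcal A(\Sigma))=\mathbb Z[x_1,x_2]$ while $\mathcal A(f(\Sigma))=\mathbb Z[x_1]$, so $f$ is a rooted cluster morphism which is not ideal.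
   Context: A seed is a triple $\Sigma=(\mathbf{ex},\mathbf{fx},B)$ where $\mathbf{ex},\mathbf{fx}$ are disjoint finite or countable sets of indeterminates (exchangeable resp. frozen variables), $\mathbf{x}=\mathbf{ex}\sqcup\mathbf{fx}$, and $B=(b_{yz})_{y\in\mathbf x,z\in\mathbf{ex}}$ is a locally finite integer matrix with skew-symmetrizable square part on $\mathbf{ex}\times\mathbf{ex}$. Mutation $\mu_x$ ($x\in\mathbf{ex}$) is Fomin–Zelevinsky mutation: $x$ is replaced by $x'$ with $xx'=\prod_{b_{yx}>0}y^{b_{yx}}+\prod_{b_{yx}<0}y^{-b_{yx}}$, frozen variables are kept, and $B$ undergoes matrix mutation. $\Sigma$-admissible sequences are sequences of successive mutations at exchangeable variables. The rooted cluster algebra $\mathcal A(\Sigma)$ is $\Sigma$ together with the $\mathbb Z$-subalgebra of $\mathbb Q(\mathbf x)$ generated by all cluster variables of all seeds obtained from $\Sigma$ by admissible mutation sequences. A rooted cluster morphism $f:\mathcal A(\Sigma)\to\mathcal A(\Sigma')$ is a ring homomorphism with (CM1) $f(\mathbf{ex})\subseteq\mathbf{ex}'\sqcup\mathbb Z$; (CM2) $f(\mathbf{fx})\subseteq\mathbf x'\sqcup\mathbb Z$; (CM3) for every $\Sigma$-admissible $(x_1,\dots,x_l)$ with $(f(x_1),\dots,f(x_l))$ $\Sigma'$-admissible and every $y\in\mathbf x$, $f(\mu_{x_l}\circ\cdots\circ\mu_{x_1,\Sigma}(y))=\mu_{f(x_l)}\circ\cdots\circ\mu_{f(x_1),\Sigma'}(f(y))$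 (read as $f(y)$ if $f(y)\in\mathbb Z$), where $\mu_{x_l}\circ\cdots\circ\mu_{x_1,\Sigma}(y)$ is the variable in the position of $y$ after mutating. Image seed: $f(\Sigma)=(\mathbf{ex}'\cap f(\mathbf{ex}),(\mathbf x'\cap f(\mathbf x))\setminus(\mathbf{ex}'\cap f(\mathbf{ex})),B'[\mathbf x'\cap f(\mathbf x)])$ (submatrix of $B'$ with the corresponding rows and columns). $f$ is ideal if $\mathcal A(f(\Sigma))=f(\mathcal A(\Sigma))$. *)

theory Defs
  imports Main "HOL-Computational_Algebra.Polynomial" "HOL-Computational_Algebra.Fraction_Field"
begin

text \<open>A (labelled) seed over a field 'k: exchangeable labels, frozen labels,
  the cluster variables at each label, and the exchange matrix (b i j = b_{x_i x_j}).\<close>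
record 'k seed =
  sex  :: "nat set"
  sfx  :: "nat set"
  svar :: "nat \<Rightarrow> 'k"
  smat :: "nat \<Rightarrow> nat \<Rightarrow> int"

definition slab :: "'k seed \<Rightarrow> nat set" where
  "slab S = sex S \<union> sfx S"

definition mut :: "nat \<Rightarrow> 'k::field seed \<Rightarrow> 'k seed" where
  "mut k S = S\<lparr>
     svar := (svar S)(k :=
        ((\<Prod>i\<in>{i\<in>slab S. smat S i k > 0}. svar S i ^ nat (smat S i k))
       + (\<Prod>i\<in>{i\<in>slab S. smat S i k < 0}. svar S i ^ nat (- smat S i k))) / svar S k),
     smat := (\<lambda>i j. if i = k \<or> j = k then - smat S i j
                   else smat S i j + sgn (smat S i k) * max 0 (smat S i k * smat S k j)) \<rparr>"

fun mut_seq :: "'k::field seed \<Rightarrow> nat list \<Rightarrow> 'k seed" where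
  "mut_seq S [] = S"
| "mut_seq S (k # ks) = mut_seq (mut k S) ks"

definition vseq :: "'k::field seed \<Rightarrow> nat list \<Rightarrow> 'k list" where
  "vseq S ks = map (\<lambda>i. svar (mut_seq S (take i ks)) (ks ! i)) [0..<length ks]"

definition admissible :: "'k seed \<Rightarrow> nat list \<Rightarrow> bool" where
  "admissible S ks \<longleftrightarrow> set ks \<subseteq> sex S"

inductive_set zalg :: "'k::comm_ring_1 set \<Rightarrow> 'k set" for G where
  zalg_int: "of_int n \<in> zalg G"
| zalg_gen: "g \<in> G \<Longrightarrow> g \<in> zalg G"
| zalg_add: "a \<in> zalg G \<Longrightarrow> b \<in> zalg G \<Longrightarrow> a + b \<in> zalg G"
| zalg_mult: "a \<in> zalg G \<Longrightarrow> b \<in> zalg G \<Longrightarrow> a * b \<in> zalg G"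

definition cluster_vars :: "'k::field seed \<Rightarrow> 'k set" where
  "cluster_vars S = {svar (mut_seq S ks) j | ks j. admissible S ks \<and> j \<in> slab S}"

definition cluster_alg :: "'k::field seed \<Rightarrow> 'k set" where
  "cluster_alg S = zalg (cluster_vars S)"

definition ring_hom_on :: "'k::comm_ring_1 set \<Rightarrow> 'k set \<Rightarrow> ('k \<Rightarrow> 'k) \<Rightarrow> bool" where
  "ring_hom_on A A' f \<longleftrightarrow> f 1 = 1 \<and> f ` A \<subseteq> A' \<and>
     (\<forall>a\<in>A. \<forall>b\<in>A. f (a + b) = f a + f b \<and> f (a * b) = f a * f b)"

definition rooted_cluster_morphism :: "'k::field seed \<Rightarrow> 'k seed \<Rightarrow> ('k \<Rightarrow> 'k) \<Rightarrow> bool" where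
  "rooted_cluster_morphism S S' f \<longleftrightarrow>
     ring_hom_on (cluster_alg S) (cluster_alg S') f
   \<and> (\<forall>j\<in>sex S. f (svar S j) \<in> svar S' ` sex S' \<union> \<int>)
   \<and> (\<forall>j\<in>sfx S. f (svar S j) \<in> svar S' ` slab S' \<union> \<int>)
   \<and> (\<forall>ks ks'. admissible S ks \<and> admissible S' ks' \<and> map f (vseq S ks) = vseq S' ks' \<longrightarrow>
        (\<forall>j\<in>slab S.
            (f (svar S j) \<in> \<int> \<longrightarrow> f (svar (mut_seq S ks) j) = f (svar S j))
          \<and> (\<forall>j'\<in>slab S'. svar S' j' = f (svar S j) \<longrightarrow>
                f (svar (mut_seq S ks) j) = svar (mut_seq S' ks') j')))"

definition image_seed :: "('k \<Rightarrow> 'k) \<Rightarrow> 'k seed \<Rightarrow> 'k seed \<Rightarrow> 'k seed" where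
  "image_seed f S S' = S'\<lparr>
     sex := {j\<in>sex S'. svar S' j \<in> f ` svar S ` sex S},
     sfx := {j\<in>slab S'. svar S' j \<in> f ` svar S ` slab S} - {j\<in>sex S'. svar S' j \<in> f ` svar S ` sex S} \<rparr>"

definition ideal_morphism :: "('k::field \<Rightarrow> 'k) \<Rightarrow> 'k seed \<Rightarrow> 'k seed \<Rightarrow> bool" where
  "ideal_morphism f S S' \<longleftrightarrow> cluster_alg (image_seed f S S') = f ` cluster_alg S"

type_synonym rf = "int poly poly poly poly fract"

definition x1 :: rf where "x1 = Fract [:[:[:[:0, 1:]:]:]:] 1"
definition x2 :: rf where "x2 = Fract [:[:[:0, 1:]:]:] 1"
definition x3 :: rf where "x3 = Fract [:[:0, 1:]:] 1"
definition x4 :: rf where "x4 = Fract [:0, 1:] 1"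

definition Sigma :: "rf seed" where
  "Sigma = \<lparr> sex = {1, 2}, sfx = {3, 4},
     svar = (\<lambda>i. if i = 1 then x1 else if i = 2 then x2 else if i = 3 then x3
                 else if i = 4 then x4 else 0),
     smat = (\<lambda>i j. if i = 1 \<and> j = 2 then 1 else if i = 2 \<and> j = 1 then -1
                   else if i = 3 \<and> j = 2 then -1 else 0) \<rparr>"

end

theory Submission
  imports Defs
begin

text \<open>
  The seed \<open>Sigma\<close> is of finite type \<open>A2\<close> with two frozen variables.  Its exchange graph is a
  pentagon of ten labelled seeds, so the cluster variables are \<open>x1, x2, x3, x4\<close> and
  \<open>z1 = (1 + x2)/x1\<close>, \<open>z2 = (x1 + x3)/x2\<close>, \<open>z12 = (x1 + x3 + x2 x3)/(x1 x2)\<close>; this gives the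
  presentation of the cluster algebra.

  The required morphism is obtained on the ambient field \<open>\<rat>(x1,x2,x3,x4)\<close>: first substitute
  \<open>x2 \<mapsto> x1 x2 - 1\<close> (a field automorphism sending \<open>z1\<close> to \<open>x2\<close>), then specialise
  \<open>x1 \<mapsto> 0, x2 \<mapsto> y, x3 \<mapsto> 0, x4 \<mapsto> x1\<close>.  The specialisation is only partially defined, but all
  generators, hence the whole cluster algebra, lie in its domain.  Such a morphism is rooted
  because it sends the exchangeable variables to \<open>0\<close> and \<open>-1\<close>, so no mutation sequence is
  compatible with it and (CM3) is vacuous.  Choosing \<open>y = 0\<close> and \<open>y = 1\<close> gives two morphisms
  that agree on the initial cluster, and for \<open>y = x2\<close> the image \<open>\<int>[x1,x2]\<close> differs from the
  cluster algebra \<open>\<int>[x1]\<close> of the image seed.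
\<close>

lemma zalg_hom_into:
  assumes hom: "\<And>a b. a \<in> zalg G \<Longrightarrow> b \<in> zalg G \<Longrightarrow> f (a + b) = f a + f b \<and> f (a * b) = f a * f b"
    and ints: "\<And>n. f (of_int n) = of_int n"
    and gens: "\<And>g. g \<in> G \<Longrightarrow> f g \<in> zalg H"
    and r: "r \<in> zalg G"
  shows "f r \<in> zalg H"
  using r by induction (simp_all add: ints gens hom zalg.intros)

lemma additive_of_int:
  fixes f :: "'a::ring_1 \<Rightarrow> 'b::ring_1"
  assumes one: "f 1 = 1" and add: "\<And>i j. f (of_int i + of_int j) = f (of_int i) + f (of_int j)"
  shows "f (of_int n) = of_int n"
proof -
  have "f 0 = 0" using add[of 0 0] by simp
  then show ?thesis
  proof (induction n rule: int_induct[where k = 0])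
    case (step1 i)
    then show ?case using add[of i 1] one by simp
  next
    case (step2 i)
    then show ?case using add[of "i - 1" 1] one by (simp add: algebra_simps)
  qed simp
qed

lemma hom_of_int: "ring_hom_on (zalg G) B f \<Longrightarrow> f (of_int n) = of_int n"
  unfolding ring_hom_on_def by (intro additive_of_int) (simp_all add: zalg.zalg_int)

lemma zalg_mono:
  assumes "G \<subseteq> H"
  shows "zalg G \<subseteq> zalg H"
proof
  fix r assume "r \<in> zalg G"
  then show "r \<in> zalg H"
    by induction (use assms in \<open>simp_all add: zalg.zalg_int zalg.zalg_add zalg.zalg_mult zalg.zalg_gen subset_iff\<close>)
qed

lemma zalg_insert_absorb:
  assumes "c \<in> zalg G"
  shows "zalg (insert c G) = zalg G"
proof
  show "zalg (insert c G) \<subseteq> zalg G"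
  proof
    fix r assume "r \<in> zalg (insert c G)"
    then show "r \<in> zalg G"
      by induction (use assms in \<open>auto simp: zalg.zalg_int zalg.zalg_add zalg.zalg_mult zalg.zalg_gen\<close>)
  qed
qed (rule zalg_mono, blast)

lemma zalg_image:
  assumes f: "ring_hom_on (zalg G) B f"
  shows "f ` zalg G = zalg (f ` G)"
proof
  have hom: "\<And>a b. a \<in> zalg G \<Longrightarrow> b \<in> zalg G \<Longrightarrow> f (a + b) = f a + f b \<and> f (a * b) = f a * f b"
    using f unfolding ring_hom_on_def by blast
  show "f ` zalg G \<subseteq> zalg (f ` G)"
    using zalg_hom_into[OF hom hom_of_int[OF f]] zalg.zalg_gen[of _ "f ` G"] by blast
  show "zalg (f ` G) \<subseteq> f ` zalg G"
  proof
    fix r assume "r \<in> zalg (f ` G)"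
    then show "r \<in> f ` zalg G"
    proof induction
      case (zalg_int n)
      show ?case using hom_of_int[OF f, of n] zalg.zalg_int[of n G] by (intro image_eqI) simp_all
    next
      case (zalg_gen g)
      then show ?case using zalg.zalg_gen[of _ G] by blast
    next
      case (zalg_add a b)
      then obtain a' b' where "a = f a'" "b = f b'" "a' \<in> zalg G" "b' \<in> zalg G" by blast
      then show ?case using hom zalg.zalg_add[of a' G b'] by (intro image_eqI[of _ f "a' + b'"]) simp_all
    next
      case (zalg_mult a b)
      then obtain a' b' where "a = f a'" "b = f b'" "a' \<in> zalg G" "b' \<in> zalg G" by blast
      then show ?case using hom zalg.zalg_mult[of a' G b'] by (intro image_eqI[of _ f "a' * b'"]) simp_all
    qed
  qed
qed

definition rhom :: "('a::comm_ring_1 \<Rightarrow> 'b::comm_ring_1) \<Rightarrow> bool" where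
  "rhom f \<longleftrightarrow> f 1 = 1 \<and> (\<forall>a b. f (a + b) = f a + f b) \<and> (\<forall>a b. f (a * b) = f a * f b)"

lemma rhomD:
  assumes "rhom f"
  shows "f 1 = 1" "f (a + b) = f a + f b" "f (a * b) = f a * f b" "f 0 = 0"
proof -
  show "f 1 = 1" "f (a + b) = f a + f b" "f (a * b) = f a * f b" for a b
    using assms unfolding rhom_def by auto
  then show "f 0 = 0" by (metis add_cancel_right_right add_0)
qed

lemma rhom_of_int: "rhom f \<Longrightarrow> f (of_int n) = of_int n"
  by (intro additive_of_int) (simp_all add: rhomD)

lemma rhom_diff: "rhom f \<Longrightarrow> f (a - b) = f a - f b"
  using rhomD(2)[of f "a - b" b] by (simp add: eq_diff_eq)

lemma rhom_map_poly:
  assumes f: "rhom f"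
  shows "rhom (map_poly f)"
proof -
  have add: "map_poly f (p + q) = map_poly f p + map_poly f q" for p q
    by (intro poly_eqI) (simp add: coeff_map_poly rhomD[OF f])
  have "map_poly f (p * q) = map_poly f p * map_poly f q" for p q
  proof (induction p)
    case (pCons a p)
    have "map_poly f (pCons a p * q) = map_poly f (smult a q + pCons 0 (p * q))" by simp
    also have "\<dots> = smult (f a) (map_poly f q) + pCons 0 (map_poly f (p * q))"
      by (simp add: add rhomD[OF f] map_poly_smult map_poly_pCons)
    also have "\<dots> = map_poly f (pCons a p) * map_poly f q"
      by (simp add: pCons.IH map_poly_pCons rhomD[OF f])
    finally show ?case .
  qed simp
  with add show ?thesis unfolding rhom_def by (simp add: rhomD[OF f])
qed

lemma rhom_poly_eval: "rhom f \<Longrightarrow> rhom (\<lambda>p. poly (map_poly f p) c)"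
  using rhom_map_poly[of f] unfolding rhom_def by simp

lemma rhom_pcompose: "rhom (\<lambda>p::'a::comm_ring_1 poly. pcompose p q)"
  unfolding rhom_def by (simp add: pcompose_add pcompose_mult pcompose_1)

lemma Fract_of_int: "(of_int n :: 'a::idom fract) = Fract (of_int n) 1"
proof -
  have "rhom (\<lambda>a::'a. Fract a 1)"
    unfolding rhom_def by (simp add: One_fract_def)
  from rhom_of_int[OF this] show ?thesis by simp
qed

text \<open>Evaluation of fractions \<open>P/Q\<close> through a ring homomorphism \<open>h\<close> into a field,
  well defined on the fractions admitting a representation with \<open>h Q \<noteq> 0\<close>.\<close>

definition frac_eval :: "('a::idom \<Rightarrow> 'b::field) \<Rightarrow> 'a fract \<Rightarrow> 'b" where
  "frac_eval h r = (SOME v. \<exists>P Q. h Q \<noteq> 0 \<and> r = Fract P Q \<and> v = h P / h Q)"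

definition frac_dom :: "('a::idom \<Rightarrow> 'b::field) \<Rightarrow> 'a fract set" where
  "frac_dom h = {r. \<exists>P Q. h Q \<noteq> 0 \<and> r = Fract P Q}"

lemma frac_dom_Fract: "h Q \<noteq> 0 \<Longrightarrow> Fract P Q \<in> frac_dom h"
  unfolding frac_dom_def by blast

lemma frac_eval_Fract:
  assumes h: "rhom h" and Q: "h Q \<noteq> 0"
  shows "frac_eval h (Fract P Q) = h P / h Q"
  unfolding frac_eval_def
proof (rule some_equality)
  show "\<exists>P' Q'. h Q' \<noteq> 0 \<and> Fract P Q = Fract P' Q' \<and> h P / h Q = h P' / h Q'"
    using Q by blast
next
  fix v assume "\<exists>P' Q'. h Q' \<noteq> 0 \<and> Fract P Q = Fract P' Q' \<and> v = h P' / h Q'"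
  then obtain P' Q' where Q': "h Q' \<noteq> 0" and eq: "Fract P Q = Fract P' Q'" and v: "v = h P' / h Q'"
    by blast
  have "Q \<noteq> 0" "Q' \<noteq> 0" using Q Q' rhomD(4)[OF h] by auto
  with eq have "P * Q' = P' * Q" by (simp add: eq_fract)
  then have "h P * h Q' = h P' * h Q" by (metis rhomD(3)[OF h])
  then show "v = h P / h Q" using v Q Q' by (simp add: frac_eq_eq mult.commute)
qed

lemma frac_eval_add_mult:
  assumes h: "rhom h" and a: "a \<in> frac_dom h" and b: "b \<in> frac_dom h"
  shows "a + b \<in> frac_dom h" "frac_eval h (a + b) = frac_eval h a + frac_eval h b"
    "a * b \<in> frac_dom h" "frac_eval h (a * b) = frac_eval h a * frac_eval h b"
proof -
  obtain P Q where PQ: "h Q \<noteq> 0" "a = Fract P Q" using a unfolding frac_dom_def by blast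
  obtain P' Q' where PQ': "h Q' \<noteq> 0" "b = Fract P' Q'" using b unfolding frac_dom_def by blast
  have "Q \<noteq> 0" "Q' \<noteq> 0" using PQ PQ' rhomD(4)[OF h] by auto
  then have sum: "a + b = Fract (P * Q' + P' * Q) (Q * Q')" and prod: "a * b = Fract (P * P') (Q * Q')"
    using PQ PQ' by simp_all
  have den: "h (Q * Q') \<noteq> 0" using PQ PQ' by (simp add: rhomD[OF h])
  show "a + b \<in> frac_dom h" "a * b \<in> frac_dom h"
    unfolding sum prod using den by (simp_all add: frac_dom_Fract)
  show "frac_eval h (a + b) = frac_eval h a + frac_eval h b"
    "frac_eval h (a * b) = frac_eval h a * frac_eval h b"
    unfolding sum prod using den PQ PQ'
    by (simp_all add: frac_eval_Fract[OF h] rhomD[OF h] add_divide_distrib)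
qed

lemma rhom_frac_eval:
  assumes h: "rhom h" and inj: "\<And>Q. Q \<noteq> 0 \<Longrightarrow> h Q \<noteq> 0"
  shows "rhom (frac_eval h)"
proof -
  have dom: "r \<in> frac_dom h" for r
    by (cases r) (simp add: frac_dom_Fract inj)
  have "frac_eval h 1 = 1"
    using frac_eval_Fract[OF h, of 1 1] by (simp add: One_fract_def rhomD[OF h])
  then show ?thesis unfolding rhom_def using frac_eval_add_mult[OF h dom dom] by simp
qed

lemma frac_eval_of_int:
  assumes h: "rhom h"
  shows "of_int n \<in> frac_dom h" "frac_eval h (of_int n) = of_int n"
  using frac_eval_Fract[OF h, of 1 "of_int n"] frac_dom_Fract[of h 1 "of_int n"]
  by (simp_all add: Fract_of_int rhomD[OF h] rhom_of_int[OF h])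

lemma vseq_length: "length (vseq S ks) = length ks"
  by (simp add: vseq_def)

lemma vseq_Cons_nth0: "vseq S (k # ks) ! 0 = svar S k"
  by (simp add: vseq_def del: upt_Suc)

text \<open>A ring homomorphism satisfying (CM1) and (CM2) that sends no exchangeable
  variable of \<open>S\<close> to an exchangeable variable of \<open>S'\<close> is a rooted cluster morphism:
  only the empty sequences are admissible for both sides, so (CM3) holds trivially.\<close>

lemma rooted_cluster_morphismI_no_exchange:
  assumes hom: "ring_hom_on (cluster_alg S) (cluster_alg S') f"
    and CM1: "\<forall>j\<in>sex S. f (svar S j) \<in> svar S' ` sex S' \<union> \<int>"
    and CM2: "\<forall>j\<in>sfx S. f (svar S j) \<in> svar S' ` slab S' \<union> \<int>"
    and no_exchange: "\<And>j. j \<in> sex S \<Longrightarrow> f (svar S j) \<notin> svar S' ` sex S'"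
  shows "rooted_cluster_morphism S S' f"
proof -
  have only_empty: "ks = [] \<and> ks' = []"
    if adm: "admissible S ks" "admissible S' ks'" and eq: "map f (vseq S ks) = vseq S' ks'" for ks ks'
  proof (cases ks)
    case (Cons k t)
    moreover obtain k' t' where "ks' = k' # t'"
      using arg_cong[OF eq, of length] Cons by (cases ks') (auto simp: vseq_length)
    moreover have "f (svar S k) = svar S' k'"
      using arg_cong[OF eq, of "\<lambda>l. l ! 0"] calculation by (simp add: vseq_Cons_nth0 vseq_length)
    ultimately show ?thesis using adm no_exchange unfolding admissible_def by auto
  qed (use arg_cong[OF eq, of length] in \<open>simp add: vseq_length\<close>)
  show ?thesis
    unfolding rooted_cluster_morphism_def using hom CM1 CM2 by (auto dest: only_empty)
qed

text \<open>The seeds mutation equivalent to \<open>Sigma\<close> all have this shape: exchangeable labels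
  1, 2 carrying \<open>v1, v2\<close>, frozen labels 3, 4 carrying \<open>x3, x4\<close>, and exchange matrix
  \<open>b12 = e\<close>, \<open>b21 = -e\<close>, \<open>b31 = p\<close>, \<open>b32 = q\<close>, all other entries 0.\<close>

definition mk_seed :: "rf \<Rightarrow> rf \<Rightarrow> int \<Rightarrow> int \<Rightarrow> int \<Rightarrow> rf seed" where
  "mk_seed v1 v2 e p q = \<lparr> sex = {1, 2}, sfx = {3, 4},
     svar = (\<lambda>i. if i = 1 then v1 else if i = 2 then v2 else if i = 3 then x3
                 else if i = 4 then x4 else 0),
     smat = (\<lambda>i j. if i = 1 \<and> j = 2 then e else if i = 2 \<and> j = 1 then -e
                   else if i = 3 \<and> j = 1 then p else if i = 3 \<and> j = 2 then q else 0) \<rparr>"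

lemma mk_seed_simps:
  "sex (mk_seed v1 v2 e p q) = {1,2}" "sfx (mk_seed v1 v2 e p q) = {3,4}"
  "slab (mk_seed v1 v2 e p q) = {1,2,3,4}"
  "svar (mk_seed v1 v2 e p q) = (\<lambda>i. if i = 1 then v1 else if i = 2 then v2 else if i = 3 then x3
                 else if i = 4 then x4 else 0)"
  "smat (mk_seed v1 v2 e p q) = (\<lambda>i j. if i = 1 \<and> j = 2 then e else if i = 2 \<and> j = 1 then -e
                   else if i = 3 \<and> j = 1 then p else if i = 3 \<and> j = 2 then q else 0)"
  by (auto simp: mk_seed_def slab_def)

lemma Sigma_eq_mk_seed: "Sigma = mk_seed x1 x2 1 0 (-1)"
  unfolding Sigma_def mk_seed_def by (auto simp: fun_eq_iff)

lemma prod_filter4: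
  "(\<Prod>i\<in>{i\<in>{1,2,3,4::nat}. P i}. g i) =
   (if P 1 then g 1 else 1) * (if P 2 then g 2 else 1) * (if P 3 then g 3 else 1) * (if P 4 then g 4 else 1)"
  by (subst prod.inter_filter) (simp_all add: mult_ac)

lemma mut_1_mk_seed: "mut 1 (mk_seed v1 v2 e p q) = mk_seed
   (((if -e > 0 then v2 ^ nat (-e) else 1) * (if p > 0 then x3 ^ nat p else 1)
    + (if -e < 0 then v2 ^ nat e else 1) * (if p < 0 then x3 ^ nat (-p) else 1)) / v1)
   v2 (-e) (-p) (q + sgn p * max 0 (p * e))"
proof -
  have "(\<lambda>i j. if i = 1 \<or> j = 1 then - smat (mk_seed v1 v2 e p q) i j
          else smat (mk_seed v1 v2 e p q) i j + sgn (smat (mk_seed v1 v2 e p q) i 1)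
             * max 0 (smat (mk_seed v1 v2 e p q) i 1 * smat (mk_seed v1 v2 e p q) 1 j))
     = smat (mk_seed v1 v2 (-e) (-p) (q + sgn p * max 0 (p * e)))"
    unfolding mk_seed_simps by (intro ext) (auto simp: sgn_if)
  then show ?thesis
    unfolding mut_def mk_seed_simps(3) prod_filter4
    by (intro seed.equality) (auto simp: mk_seed_simps fun_eq_iff)
qed

lemma mut_2_mk_seed: "mut 2 (mk_seed v1 v2 e p q) = mk_seed v1
   (((if e > 0 then v1 ^ nat e else 1) * (if q > 0 then x3 ^ nat q else 1)
    + (if e < 0 then v1 ^ nat (-e) else 1) * (if q < 0 then x3 ^ nat (-q) else 1)) / v2)
   (-e) (p + sgn q * max 0 (q * (-e))) (-q)"
proof -
  have "(\<lambda>i j. if i = 2 \<or> j = 2 then - smat (mk_seed v1 v2 e p q) i j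
          else smat (mk_seed v1 v2 e p q) i j + sgn (smat (mk_seed v1 v2 e p q) i 2)
             * max 0 (smat (mk_seed v1 v2 e p q) i 2 * smat (mk_seed v1 v2 e p q) 2 j))
     = smat (mk_seed v1 v2 (-e) (p + sgn q * max 0 (q * (-e))) (-q))"
    unfolding mk_seed_simps by (intro ext) (auto simp: sgn_if mult_le_0_iff)
  then show ?thesis
    unfolding mut_def mk_seed_simps(3) prod_filter4
    by (intro seed.equality) (auto simp: mk_seed_simps fun_eq_iff)
qed

lemma Fract_1_simps:
  "Fract a 1 + Fract b 1 = Fract (a + b) (1::'a::idom)"
  "Fract a 1 * Fract b 1 = Fract (a * b) (1::'a::idom)"
  "- Fract a 1 = Fract (-a) (1::'a::idom)"
  "Fract a 1 = Fract b (1::'a::idom) \<longleftrightarrow> a = b"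
  "(0::'a::idom fract) = Fract 0 1" "(1::'a::idom fract) = Fract 1 1"
  by (simp_all add: eq_fract Zero_fract_def One_fract_def)

lemma vars_distinct:
  "x1 \<noteq> 0" "x2 \<noteq> 0" "x3 \<noteq> 0" "x4 \<noteq> 0" "x1 \<noteq> -1" "x2 \<noteq> -1" "x3 \<noteq> -1" "x4 \<noteq> -1"
  "x1 \<noteq> x2" "x3 \<noteq> x1" "x4 \<noteq> x1"
  "1 + x2 \<noteq> 0" "x1 + x3 \<noteq> 0" "x1 + x3 + x2 * x3 \<noteq> 0"
  by (simp_all add: x1_def x2_def x3_def x4_def Fract_1_simps del: eq_fract) (simp_all add: one_pCons)

definition z1 :: rf where "z1 = (1 + x2) / x1"
definition z2 :: rf where "z2 = (x1 + x3) / x2"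
definition z12 :: rf where "z12 = (x1 + x3 + x2 * x3) / (x1 * x2)"

lemma z_nonzero: "z1 \<noteq> 0" "z2 \<noteq> 0" "z12 \<noteq> 0"
  using vars_distinct unfolding z1_def z2_def z12_def by auto

lemma exchange_relations:
  "(x2 + 1) / z1 = x1" "(1 + z1 * x3) / x2 = z12" "(z1 * x3 + 1) / z12 = x2" "(1 + z12) / z1 = z2"
  "(z12 + 1) / z2 = z1" "(x3 + z2) / z12 = x1" "(z2 + x3) / x1 = z12" "(x3 + x1) / z2 = x2"
  using vars_distinct z_nonzero
  by (simp_all add: nonzero_divide_eq_eq) (simp_all add: z1_def z2_def z12_def field_simps)

lemma exchange_graph:
  "mut 1 (mk_seed x1 x2 1 0 (-1)) = mk_seed z1 x2 (-1) 0 (-1)"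
  "mut 2 (mk_seed x1 x2 1 0 (-1)) = mk_seed x1 z2 (-1) (-1) 1"
  "mut 1 (mk_seed z1 x2 (-1) 0 (-1)) = mk_seed x1 x2 1 0 (-1)"
  "mut 2 (mk_seed z1 x2 (-1) 0 (-1)) = mk_seed z1 z12 1 0 1"
  "mut 1 (mk_seed z1 z12 1 0 1) = mk_seed z2 z12 (-1) 0 1"
  "mut 2 (mk_seed z1 z12 1 0 1) = mk_seed z1 x2 (-1) 0 (-1)"
  "mut 1 (mk_seed z2 z12 (-1) 0 1) = mk_seed z1 z12 1 0 1"
  "mut 2 (mk_seed z2 z12 (-1) 0 1) = mk_seed z2 x1 1 1 (-1)"
  "mut 1 (mk_seed z2 x1 1 1 (-1)) = mk_seed x2 x1 (-1) (-1) 0"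
  "mut 2 (mk_seed z2 x1 1 1 (-1)) = mk_seed z2 z12 (-1) 0 1"
  "mut 1 (mk_seed x2 x1 (-1) (-1) 0) = mk_seed z2 x1 1 1 (-1)"
  "mut 2 (mk_seed x2 x1 (-1) (-1) 0) = mk_seed x2 z1 1 (-1) 0"
  "mut 1 (mk_seed x2 z1 1 (-1) 0) = mk_seed z12 z1 (-1) 1 0"
  "mut 2 (mk_seed x2 z1 1 (-1) 0) = mk_seed x2 x1 (-1) (-1) 0"
  "mut 1 (mk_seed z12 z1 (-1) 1 0) = mk_seed x2 z1 1 (-1) 0"
  "mut 2 (mk_seed z12 z1 (-1) 1 0) = mk_seed z12 z2 1 1 0"
  "mut 1 (mk_seed z12 z2 1 1 0) = mk_seed x1 z2 (-1) (-1) 1"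
  "mut 2 (mk_seed z12 z2 1 1 0) = mk_seed z12 z1 (-1) 1 0"
  "mut 1 (mk_seed x1 z2 (-1) (-1) 1) = mk_seed z12 z2 1 1 0"
  "mut 2 (mk_seed x1 z2 (-1) (-1) 1) = mk_seed x1 x2 1 0 (-1)"
  using vars_distinct z_nonzero
  by (simp_all only: mut_1_mk_seed mut_2_mk_seed)
     (simp_all add: exchange_relations z1_def[symmetric] z2_def[symmetric])

definition reachable_seeds :: "rf seed set" where
  "reachable_seeds = {mk_seed x1 x2 1 0 (-1), mk_seed z1 x2 (-1) 0 (-1), mk_seed z1 z12 1 0 1,
     mk_seed z2 z12 (-1) 0 1, mk_seed z2 x1 1 1 (-1), mk_seed x2 x1 (-1) (-1) 0,
     mk_seed x2 z1 1 (-1) 0, mk_seed z12 z1 (-1) 1 0, mk_seed z12 z2 1 1 0, mk_seed x1 z2 (-1) (-1) 1}"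

lemma mut_reachable: "S \<in> reachable_seeds \<Longrightarrow> k \<in> {1, 2} \<Longrightarrow> mut k S \<in> reachable_seeds"
  unfolding reachable_seeds_def by (auto simp only: exchange_graph insert_iff numeral_One)

lemma mut_seq_reachable:
  "S \<in> reachable_seeds \<Longrightarrow> set ks \<subseteq> {1, 2} \<Longrightarrow> mut_seq S ks \<in> reachable_seeds"
  by (induction ks arbitrary: S) (simp_all add: mut_reachable)

lemma cluster_vars_Sigma: "cluster_vars Sigma = {x1, x2, x3, x4, z1, z2, z12}"
proof
  show "cluster_vars Sigma \<subseteq> {x1, x2, x3, x4, z1, z2, z12}"
  proof
    fix v assume "v \<in> cluster_vars Sigma"
    then obtain ks j where v: "v = svar (mut_seq Sigma ks) j" and "set ks \<subseteq> {1, 2}"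
      and j: "j \<in> {1, 2, 3, 4}"
      unfolding cluster_vars_def admissible_def Sigma_eq_mk_seed mk_seed_simps by blast
    then have "mut_seq Sigma ks \<in> reachable_seeds"
      by (intro mut_seq_reachable) (simp_all add: Sigma_eq_mk_seed reachable_seeds_def)
    then show "v \<in> {x1, x2, x3, x4, z1, z2, z12}"
      using v j unfolding reachable_seeds_def by (auto simp: mk_seed_simps)
  qed
next
  have var: "svar (mut_seq Sigma ks) j \<in> cluster_vars Sigma"
    if "set ks \<subseteq> {1, 2}" "j \<in> {1, 2, 3, 4}" for ks j
    using that unfolding cluster_vars_def admissible_def Sigma_eq_mk_seed mk_seed_simps by blast
  have "x1 = svar (mut_seq Sigma []) 1" "x2 = svar (mut_seq Sigma []) 2"
       "x3 = svar (mut_seq Sigma []) 3" "x4 = svar (mut_seq Sigma []) 4"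
       "z1 = svar (mut_seq Sigma [1]) 1" "z2 = svar (mut_seq Sigma [2]) 2"
       "z12 = svar (mut_seq Sigma [1, 2]) 2"
    by (simp_all only: mut_seq.simps Sigma_eq_mk_seed exchange_graph) (simp_all add: mk_seed_simps)
  then show "{x1, x2, x3, x4, z1, z2, z12} \<subseteq> cluster_vars Sigma"
    using var by (metis empty_subsetI empty_set insert_subset list.simps(15) insertI1 insertCI)
qed

abbreviation gens :: "rf set" where "gens \<equiv> {x1, x2, x3, x4, z1, z2, z12}"

lemma cluster_alg_Sigma: "cluster_alg Sigma = zalg gens"
  unfolding cluster_alg_def cluster_vars_Sigma ..

text \<open>The variables as elements of \<open>\<int>[x1,x2,x3,x4]\<close>; the outermost polynomial variable is \<open>x4\<close>.\<close>

definition X1 :: "int poly poly poly poly" where "X1 = [:[:[:[:0, 1:]:]:]:]"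
definition X2 :: "int poly poly poly poly" where "X2 = [:[:[:0, 1:]:]:]"
definition X3 :: "int poly poly poly poly" where "X3 = [:[:0, 1:]:]"
definition X4 :: "int poly poly poly poly" where "X4 = [:0, 1:]"

lemma X_nonzero: "X1 \<noteq> 0" "X2 \<noteq> 0" "X3 \<noteq> 0" "X4 \<noteq> 0"
  by (simp_all add: X1_def X2_def X3_def X4_def)

lemma vars_Fract: "x1 = Fract X1 1" "x2 = Fract X2 1" "x3 = Fract X3 1" "x4 = Fract X4 1"
  by (simp_all add: x1_def x2_def x3_def x4_def X1_def X2_def X3_def X4_def)

lemma z_Fract: "z1 = Fract (1 + X2) X1" "z2 = Fract (X1 + X3) X2"
  "z12 = Fract (X1 + X3 + X2 * X3) (X1 * X2)"
  by (simp_all add: z1_def z2_def z12_def vars_Fract One_fract_def X_nonzero)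

text \<open>It turns \<open>z1\<close> into \<open>x2\<close>,
  removing the denominator \<open>x1\<close> that the specialisation \<open>x1 \<mapsto> 0\<close> below would kill.\<close>

definition x1x2_minus_1 :: "int poly poly" where "x1x2_minus_1 = [:[:-1:], [:0, 1:]:]"

definition shift_x2 :: "int poly poly poly poly \<Rightarrow> int poly poly poly poly" where
  "shift_x2 = map_poly (map_poly (\<lambda>p. pcompose p x1x2_minus_1))"

lemma rhom_shift_x2: "rhom shift_x2"
  unfolding shift_x2_def by (intro rhom_map_poly rhom_pcompose)

text \<open>The substitution is injective, so it extends to the fraction field.\<close>

lemma shift_x2_nonzero: "P \<noteq> 0 \<Longrightarrow> shift_x2 P \<noteq> 0"
proof -
  have comp: "pcompose p x1x2_minus_1 = 0 \<longleftrightarrow> p = 0" for p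
    by (rule pcompose_eq_0_iff) (simp add: x1x2_minus_1_def)
  have "map_poly (\<lambda>p. pcompose p x1x2_minus_1) Q = 0 \<longleftrightarrow> Q = 0" for Q
    by (rule map_poly_eq_0_iff) (simp_all add: comp)
  then show "P \<noteq> 0 \<Longrightarrow> shift_x2 P \<noteq> 0"
    unfolding shift_x2_def by (subst map_poly_eq_0_iff) simp_all
qed

lemma shift_x2_vars: "shift_x2 X1 = X1" "shift_x2 X2 = X2 * X1 - 1" "shift_x2 X3 = X3" "shift_x2 X4 = X4"
  by (simp_all add: shift_x2_def X1_def X2_def X3_def X4_def map_poly_pCons pcompose_pCons one_pCons x1x2_minus_1_def)

definition tau :: "rf \<Rightarrow> rf" where
  "tau = frac_eval (\<lambda>P. Fract (shift_x2 P) 1)"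

lemma rhom_Fract_shift: "rhom (\<lambda>P. Fract (shift_x2 P) 1)"
  unfolding rhom_def by (simp add: rhomD[OF rhom_shift_x2] One_fract_def)

lemma rhom_tau: "rhom tau"
  unfolding tau_def by (rule rhom_frac_eval[OF rhom_Fract_shift]) (simp add: shift_x2_nonzero Zero_fract_def eq_fract)

lemma tau_Fract: "Q \<noteq> 0 \<Longrightarrow> tau (Fract P Q) = Fract (shift_x2 P) (shift_x2 Q)"
  unfolding tau_def by (subst frac_eval_Fract[OF rhom_Fract_shift]) (simp_all add: shift_x2_nonzero Zero_fract_def eq_fract)

definition ev :: "rf \<Rightarrow> int poly poly poly poly \<Rightarrow> rf" where
  "ev y P = poly (map_poly (\<lambda>P3. poly (map_poly (\<lambda>P2. poly (map_poly
              (\<lambda>P1. poly (map_poly of_int P1) 0) P2) y) P3) 0) P) x1"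

lemma rhom_ev: "rhom (ev y)"
proof -
  have "rhom (of_int :: int \<Rightarrow> rf)" unfolding rhom_def by simp
  then show ?thesis unfolding ev_def by (intro rhom_poly_eval)
qed

lemma ev_vars: "ev y X1 = 0" "ev y X2 = y" "ev y X3 = 0" "ev y X4 = x1"
  by (simp_all add: ev_def X1_def X2_def X3_def X4_def map_poly_pCons)

text \<open>The only new denominator \<open>x1 x2 - 1\<close> created by \<open>tau\<close> specialises to \<open>-1\<close>.\<close>

lemma ev_shift_denominator: "ev y (X2 * X1 - 1) = -1"
  by (simp add: rhomD[OF rhom_ev] rhom_diff[OF rhom_ev] ev_vars)

lemma tau_vars: "tau x1 = Fract X1 1" "tau x2 = Fract (X2 * X1 - 1) 1"
  "tau x3 = Fract X3 1" "tau x4 = Fract X4 1"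
  by (simp_all add: vars_Fract tau_Fract shift_x2_vars rhomD[OF rhom_shift_x2])

lemma tau_z: "tau z1 = Fract X2 1" "tau z2 = Fract (X1 + X3) (X2 * X1 - 1)"
  "tau z12 = Fract (1 + X2 * X3) (X2 * X1 - 1)"
proof -
  have den: "X2 * X1 - 1 \<noteq> 0"
    using ev_shift_denominator[of 0] rhomD(4)[OF rhom_ev] by force
  show "tau z1 = Fract X2 1" "tau z2 = Fract (X1 + X3) (X2 * X1 - 1)"
    by (simp_all add: z_Fract tau_Fract X_nonzero rhomD[OF rhom_shift_x2] shift_x2_vars eq_fract)
  have "tau z12 = Fract (X1 + X3 + (X2 * X1 - 1) * X3) (X1 * (X2 * X1 - 1))"
    by (simp add: z_Fract tau_Fract X_nonzero rhomD[OF rhom_shift_x2] shift_x2_vars)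
  also have "\<dots> = Fract (1 + X2 * X3) (X2 * X1 - 1)"
    using X_nonzero den by (simp add: eq_fract algebra_simps)
  finally show "tau z12 = Fract (1 + X2 * X3) (X2 * X1 - 1)" .
qed

definition fmor :: "rf \<Rightarrow> rf \<Rightarrow> rf" where
  "fmor y r = frac_eval (ev y) (tau r)"

lemma fmor_vars: "fmor y x1 = 0" "fmor y x2 = -1" "fmor y x3 = 0" "fmor y x4 = x1"
  "fmor y z1 = y" "fmor y z2 = 0" "fmor y z12 = -1"
  by (simp_all add: fmor_def tau_vars tau_z frac_eval_Fract[OF rhom_ev] ev_shift_denominator
       ev_vars rhomD[OF rhom_ev] rhom_diff[OF rhom_ev])

lemma tau_cluster_alg: "r \<in> zalg gens \<Longrightarrow> tau r \<in> frac_dom (ev y)"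
proof (induction rule: zalg.induct)
  case (zalg_int n)
  show ?case by (simp add: rhom_of_int[OF rhom_tau] frac_eval_of_int[OF rhom_ev])
next
  case (zalg_gen g)
  then show ?case by (auto simp: tau_vars tau_z ev_shift_denominator rhomD[OF rhom_ev] intro!: frac_dom_Fract)
qed (simp_all add: rhomD[OF rhom_tau] frac_eval_add_mult[OF rhom_ev])

lemma fmor_ring_hom:
  assumes y: "y \<in> zalg gens"
  shows "ring_hom_on (zalg gens) (zalg gens) (fmor y)"
proof -
  have hom: "fmor y (a + b) = fmor y a + fmor y b \<and> fmor y (a * b) = fmor y a * fmor y b"
    if "a \<in> zalg gens" "b \<in> zalg gens" for a b
    using that unfolding fmor_def
    by (simp add: rhomD[OF rhom_tau] frac_eval_add_mult[OF rhom_ev] tau_cluster_alg)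
  have ints: "fmor y (of_int n) = of_int n" for n
    unfolding fmor_def by (simp add: rhom_of_int[OF rhom_tau] frac_eval_of_int[OF rhom_ev])
  have "fmor y g \<in> zalg gens" if "g \<in> gens" for g
    using that y zalg.zalg_gen[of x1 gens] zalg.zalg_int[of 0 gens] zalg.zalg_int[of "-1" gens]
    by (auto simp: fmor_vars)
  then have "fmor y ` zalg gens \<subseteq> zalg gens"
    using zalg_hom_into[OF hom ints] by blast
  then show ?thesis
    using ints[of 1] hom unfolding ring_hom_on_def by simp
qed

lemma Sigma_simps: "sex Sigma = {1, 2}" "sfx Sigma = {3, 4}" "slab Sigma = {1, 2, 3, 4}"
  "svar Sigma = (\<lambda>i. if i = 1 then x1 else if i = 2 then x2 else if i = 3 then x3
                 else if i = 4 then x4 else 0)"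
  by (simp_all add: Sigma_eq_mk_seed mk_seed_simps)

text \<open>Any ring endomorphism of the cluster algebra sending \<open>x1, x2, x3, x4\<close> to \<open>0, -1, 0, x1\<close>
  is rooted: \<open>0\<close> and \<open>-1\<close> are not exchangeable variables of \<open>Sigma\<close>.\<close>

lemma rooted_Sigma:
  assumes "ring_hom_on (cluster_alg Sigma) (cluster_alg Sigma) f"
    and "f x1 = 0" "f x2 = -1" "f x3 = 0" "f x4 = x1"
  shows "rooted_cluster_morphism Sigma Sigma f"
  using assms vars_distinct
  by (intro rooted_cluster_morphismI_no_exchange) (auto simp: Sigma_simps)

text \<open>The subring generated by \<open>x1\<close> consists of polynomials in \<open>x1\<close> only.\<close>

lemma x2_notin_zalg_x1: "x2 \<notin> zalg {x1}"
proof
  have "\<exists>p. r = Fract [:[:[:p:]:]:] 1" if "r \<in> zalg {x1}" for r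
    using that
  proof induction
    case (zalg_int n)
    show ?case by (rule exI[of _ "of_int n"]) (simp add: Fract_of_int of_int_poly)
  qed (auto simp: x1_def)
  moreover assume "x2 \<in> zalg {x1}"
  ultimately obtain p where "x2 = Fract [:[:[:p:]:]:] 1" by blast
  then show False by (simp add: x2_def Fract_1_simps del: eq_fract)
qed

lemma image_seed_Sigma:
  assumes "f x1 = 0" "f x2 = -1" "f x3 = 0" "f x4 = x1"
  shows "cluster_alg (image_seed f Sigma Sigma) = zalg {x1}"
proof -
  have "f ` svar Sigma ` sex Sigma = {0, -1}" "f ` svar Sigma ` slab Sigma = {0, -1, x1}"
    using assms by (auto simp: Sigma_simps)
  then have ex: "{j \<in> sex Sigma. svar Sigma j \<in> f ` svar Sigma ` sex Sigma} = {}"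
    and fx: "{j \<in> slab Sigma. svar Sigma j \<in> f ` svar Sigma ` slab Sigma} = {1}"
    using vars_distinct by (simp_all add: Sigma_simps set_eq_iff)
  have "image_seed f Sigma Sigma = Sigma\<lparr>sex := {}, sfx := {1}\<rparr>"
    unfolding image_seed_def ex fx by simp
  moreover have "cluster_vars (Sigma\<lparr>sex := {}, sfx := {1}\<rparr>) = {x1}"
    unfolding cluster_vars_def admissible_def slab_def by (auto simp: Sigma_simps)
  ultimately show ?thesis unfolding cluster_alg_def by simp
qed

lemma not_ideal_Sigma:
  assumes hom: "ring_hom_on (cluster_alg Sigma) (cluster_alg Sigma) f"
    and vals: "f x1 = 0" "f x2 = -1" "f x3 = 0" "f x4 = x1" "f z1 = x2" "f z2 = 0" "f z12 = -1"
  shows "f ` cluster_alg Sigma = zalg {x1, x2}" "\<not> ideal_morphism f Sigma Sigma"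
proof -
  have "f ` gens = insert (of_int 0) (insert (of_int (-1)) {x1, x2})"
    using vals by auto
  then show img: "f ` cluster_alg Sigma = zalg {x1, x2}"
    using zalg_image[OF hom[unfolded cluster_alg_Sigma]]
    by (simp add: cluster_alg_Sigma zalg_insert_absorb zalg.zalg_int del: of_int_0 of_int_minus)
  show "\<not> ideal_morphism f Sigma Sigma"
    unfolding ideal_morphism_def image_seed_Sigma[OF vals(1-4)] img
    using x2_notin_zalg_x1 zalg.zalg_gen[of x2 "{x1, x2}"] by blast
qed

lemma fmor_rooted:
  assumes "y \<in> cluster_alg Sigma"
  shows "ring_hom_on (cluster_alg Sigma) (cluster_alg Sigma) (fmor y)"
    "rooted_cluster_morphism Sigma Sigma (fmor y)"
proof -
  show hom: "ring_hom_on (cluster_alg Sigma) (cluster_alg Sigma) (fmor y)"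
    using fmor_ring_hom assms unfolding cluster_alg_Sigma .
  show "rooted_cluster_morphism Sigma Sigma (fmor y)"
    using hom by (rule rooted_Sigma) (simp_all add: fmor_vars)
qed

theorem mainTheorem2:
  shows "cluster_alg Sigma =
           zalg {x1, x2, x3, x4, (1 + x2) / x1, (x1 + x3) / x2, (x1 + x3 + x2 * x3) / (x1 * x2)}
   \<and> (\<forall>y\<in>cluster_alg Sigma. \<exists>f.
         ring_hom_on (cluster_alg Sigma) (cluster_alg Sigma) f
       \<and> f x1 = 0 \<and> f x2 = -1 \<and> f x3 = 0 \<and> f x4 = x1
       \<and> f ((1 + x2) / x1) = y \<and> f ((x1 + x3) / x2) = 0
       \<and> f ((x1 + x3 + x2 * x3) / (x1 * x2)) = -1
       \<and> rooted_cluster_morphism Sigma Sigma f)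
   \<and> (\<exists>f g. rooted_cluster_morphism Sigma Sigma f \<and> rooted_cluster_morphism Sigma Sigma g
       \<and> (\<forall>j\<in>slab Sigma. f (svar Sigma j) = g (svar Sigma j))
       \<and> (\<exists>a\<in>cluster_alg Sigma. f a \<noteq> g a))
   \<and> (\<forall>f. ring_hom_on (cluster_alg Sigma) (cluster_alg Sigma) f
       \<and> f x1 = 0 \<and> f x2 = -1 \<and> f x3 = 0 \<and> f x4 = x1
       \<and> f ((1 + x2) / x1) = x2 \<and> f ((x1 + x3) / x2) = 0
       \<and> f ((x1 + x3 + x2 * x3) / (x1 * x2)) = -1
       \<longrightarrow> rooted_cluster_morphism Sigma Sigma f
         \<and> f ` cluster_alg Sigma = zalg {x1, x2}
         \<and> cluster_alg (image_seed f Sigma Sigma) = zalg {x1}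
         \<and> \<not> ideal_morphism f Sigma Sigma)"
  unfolding z1_def[symmetric] z2_def[symmetric] z12_def[symmetric]
proof (intro conjI ballI allI impI)
  show "cluster_alg Sigma = zalg gens" by (rule cluster_alg_Sigma)
next
  fix y assume "y \<in> cluster_alg Sigma"
  then show "\<exists>f. ring_hom_on (cluster_alg Sigma) (cluster_alg Sigma) f \<and> f x1 = 0 \<and> f x2 = -1
      \<and> f x3 = 0 \<and> f x4 = x1 \<and> f z1 = y \<and> f z2 = 0 \<and> f z12 = -1 \<and> rooted_cluster_morphism Sigma Sigma f"
    using fmor_rooted fmor_vars by blast
next
  have "0 \<in> cluster_alg Sigma" "1 \<in> cluster_alg Sigma" "z1 \<in> cluster_alg Sigma"
    unfolding cluster_alg_Sigma using zalg.zalg_int[of 0] zalg.zalg_int[of 1] zalg.zalg_gen[of z1] by auto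
  then show "\<exists>f g. rooted_cluster_morphism Sigma Sigma f \<and> rooted_cluster_morphism Sigma Sigma g
      \<and> (\<forall>j\<in>slab Sigma. f (svar Sigma j) = g (svar Sigma j)) \<and> (\<exists>a\<in>cluster_alg Sigma. f a \<noteq> g a)"
    using fmor_rooted(2) fmor_vars[of 0] fmor_vars[of 1]
    by (intro exI[of _ "fmor 0"] exI[of _ "fmor 1"] conjI bexI[of _ z1]) (auto simp: Sigma_simps)
next
  fix f assume "ring_hom_on (cluster_alg Sigma) (cluster_alg Sigma) f \<and> f x1 = 0 \<and> f x2 = -1
      \<and> f x3 = 0 \<and> f x4 = x1 \<and> f z1 = x2 \<and> f z2 = 0 \<and> f z12 = -1"
  then show "rooted_cluster_morphism Sigma Sigma f" "f ` cluster_alg Sigma = zalg {x1, x2}"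
    "cluster_alg (image_seed f Sigma Sigma) = zalg {x1}" "\<not> ideal_morphism f Sigma Sigma"
    using rooted_Sigma not_ideal_Sigma image_seed_Sigma by blast+
qed

end
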